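(* Let $\mu(t)=1-3t+t^2$, $\rho(t)=1-t+t^2$, $\mu_0=(3-\sqrt5)/2$ (the zero of $\mu$ in $(0,1)$), and define polynomials $g_k(t)$ by $g_1=1$, $g_2=1-10t+19t^2-10t^3+t^4$, and for $m\ge1$ $$g_{2m+1}=2g_{2m}-\rho^2g_{2m-1},\qquad g_{2m+2}=2\mu^2g_{2m+1}-\rho^2g_{2m}.$$ Then for every $m\ge1$: $g_{2m-1}$ has exactly $2(m-1)$ zeros $\alpha_1<\dots<\alpha_{2(m-1)}$ in $[0,1]$, $g_{2m}$ has exactly $2m$ zeros $\beta_1<\dots<\beta_{2m}$ in $[0,1]$, $g_{2m+1}$ has exactly $2m$ zeros $\gamma_1<\dots<\gamma_{2m}$ in $[0,1]$; the products $g_{2m-1}g_{2m}$ and $g_{2m}g_{2m+1}$ have no repeated zeros; and $$\beta_1<\alpha_1<\beta_2<\dots<\alpha_{m-1}<\beta_m<\mu_0<\beta_{m+1}<\alpha_m<\dots<\alpha_{2(m-1)}<\beta_{2m}<1,$$ $$\gamma_1<\beta_1<\gamma_2<\dots<\gamma_m<\beta_m<\mu_0<\beta_{m+1}<\gamma_{m+1}<\dots<\beta_{2m}<\gamma_{2m}<1.$$ (Equivalently, $(t-1)\mu(t)g_{2m-1}$ and $g_{2m}$ are interlaced on $[0,1]$, and $(t-1)g_{2m}$ and $\mu(t)g_{2m+1}$ are interlaced on $[0,1]$.)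
   Context: These $g_k$ arise as factors of the normalized Alexander polynomials of a family of alternating quasi-rational knots $Y_k$; the statement is purely about the polynomials defined by the recursion. *)

theory Defs
  imports "HOL-Computational_Algebra.Polynomial"
begin

definition mu_poly :: "real poly" where "mu_poly = [:1, -3, 1:]"
definition rho_poly :: "real poly" where "rho_poly = [:1, -1, 1:]"
definition mu0 :: real where "mu0 = (3 - sqrt 5) / 2"

text \<open>gpoly k is g_k for k \<ge> 1; gpoly 0 is an irrelevant dummy value.\<close>
fun gpoly :: "nat \<Rightarrow> real poly" where
  "gpoly 0 = 0"
| "gpoly (Suc 0) = 1"
| "gpoly (Suc (Suc 0)) = [:1, -10, 19, -10, 1:]"
| "gpoly (Suc (Suc (Suc k))) =
     (if even k
      then 2 * gpoly (Suc (Suc k)) - rho_poly ^ 2 * gpoly (Suc k)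
      else 2 * mu_poly ^ 2 * gpoly (Suc (Suc k)) - rho_poly ^ 2 * gpoly (Suc k))"

definition zeros01 :: "real poly \<Rightarrow> real set" where
  "zeros01 p = {t. 0 \<le> t \<and> t \<le> 1 \<and> poly p t = 0}"

end

theory Submission
  imports Defs
begin

text \<open>
  For \<open>t \<ge> 0\<close> we have \<open>|\<mu> t| \<le> \<rho> t\<close>, so \<open>\<psi> t = arccos (\<mu> t / \<rho> t)\<close> is defined; it
  increases from \<open>0\<close> to \<open>\<pi>\<close> on [0,1] and equals \<open>\<pi>/2\<close> exactly at \<open>mu0\<close>. The recursion
  for the g_k is the Chebyshev recursion in disguise:
  \<open>\<mu> g_(2k+1) = \<rho>^(2k+1) cos ((2k+1) \<psi>)\<close> and \<open>g_(2k+2) = \<rho>^(2k+2) cos ((2k+2) \<psi>)\<close>.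
  Hence the zeros of g_n in [0,1] are the points where \<open>\<psi>\<close> takes the values
  \<open>(2i-1) \<pi> / (2n)\<close>, with \<open>\<pi>/2\<close> omitted for odd n, and interlacing reduces to comparing
  these fractions. The zeros are simple because there are enough of them: every g_n is
  palindromic, so each zero t in (0,1) comes with the zero 1/t, and together these
  account for the whole degree of \<open>g_n g_(n+1)\<close>.
\<close>

abbreviation rho :: "real \<Rightarrow> real" where "rho \<equiv> poly rho_poly"

abbreviation mu :: "real \<Rightarrow> real" where "mu \<equiv> poly mu_poly"

lemma rho_eq: "rho t = 1 - t + t^2"
  by (simp add: rho_poly_def power2_eq_square algebra_simps)

lemma mu_eq: "mu t = 1 - 3*t + t^2"
  by (simp add: mu_poly_def power2_eq_square algebra_simps)

lemma rho_pos: "rho t > 0"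
proof -
  have "rho t = (t - 1/2)^2 + 3/4" by (simp add: rho_eq power2_eq_square algebra_simps)
  thus ?thesis by (metis add_pos_nonneg zero_le_power2 zero_less_divide_iff zero_less_numeral add.commute)
qed

lemma mu_div_rho_bounds:
  assumes "t \<ge> 0"
  shows "-1 \<le> mu t / rho t" "mu t / rho t \<le> 1"
proof -
  have "rho t - mu t = 2*t" "rho t + mu t = 2*(1-t)^2"
    by (simp_all add: mu_eq rho_eq power2_eq_square algebra_simps)
  moreover have "0 \<le> 2*(1-t)^2" by simp
  ultimately have "- rho t \<le> mu t" "mu t \<le> rho t" using assms by linarith+
  then show "-1 \<le> mu t / rho t" "mu t / rho t \<le> 1"
    using rho_pos[of t] by (simp_all add: field_simps)
qed

lemma mu0_bounds: "0 < mu0" "mu0 < 1"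
proof -
  have "2 < sqrt 5" "sqrt 5 < 3"
    by (simp_all add: real_less_rsqrt real_sqrt_less_iff[of 5 9, simplified])
  then show "0 < mu0" "mu0 < 1" by (simp_all add: mu0_def)
qed

lemma mu_eq_0_iff:
  assumes "t \<le> 1"
  shows "mu t = 0 \<longleftrightarrow> t = mu0"
proof -
  have s5: "sqrt 5 * sqrt 5 = 5" by simp
  have "mu t = (t - mu0) * (t - (3 + sqrt 5)/2)"
    by (simp add: mu_eq mu0_def power2_eq_square field_simps s5)
  moreover have "0 \<le> sqrt 5" by simp
  then have "t < (3 + sqrt 5)/2" using assms by argo
  ultimately show ?thesis by simp
qed

lemma gpoly_2: "gpoly 2 = [:1, -10, 19, -10, 1:]"
  by (simp add: numeral_2_eq_2)

lemma poly_gpoly_2: "poly (gpoly 2) t = 2 * mu t ^ 2 - rho t ^ 2"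
  by (simp add: gpoly_2 mu_eq rho_eq power2_eq_square algebra_simps)

lemma gpoly_odd_step: "gpoly (2*k+3) = 2 * gpoly (2*k+2) - rho_poly ^ 2 * gpoly (2*k+1)"
proof -
  have "gpoly (Suc (Suc (Suc (2*k)))) = 2 * gpoly (Suc (Suc (2*k))) - rho_poly ^ 2 * gpoly (Suc (2*k))"
    by simp
  thus ?thesis by (simp add: eval_nat_numeral)
qed

lemma gpoly_even_step:
  "gpoly (2*k+4) = 2 * mu_poly ^ 2 * gpoly (2*k+3) - rho_poly ^ 2 * gpoly (2*k+2)"
proof -
  have "gpoly (Suc (Suc (Suc (2*k+1)))) =
      2 * mu_poly ^ 2 * gpoly (Suc (Suc (2*k+1))) - rho_poly ^ 2 * gpoly (Suc (2*k+1))"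
    by simp
  thus ?thesis by (simp add: eval_nat_numeral)
qed

lemma degree_gpoly: "degree (gpoly (2*k+1)) \<le> 4*k \<and> degree (gpoly (2*k+2)) \<le> 4*k+4"
proof (induction k)
  case 0
  show ?case by (simp add: gpoly_2)
next
  case (Suc k)
  have rho: "degree (rho_poly ^ 2) = 4"
    by (simp add: rho_poly_def degree_power_eq)
  have mu: "degree (2 * mu_poly ^ 2) \<le> 4"
    using degree_mult_le[of 2 "mu_poly ^ 2"] by (simp add: mu_poly_def degree_power_eq)
  have odd: "degree (gpoly (2*k+3)) \<le> 4*k+4"
    unfolding gpoly_odd_step
    using Suc degree_mult_le[of "rho_poly ^ 2" "gpoly (2*k+1)"] rho
    by (intro degree_diff_le) (auto intro: order.trans[OF degree_mult_le])
  moreover have "degree (gpoly (2*k+4)) \<le> 4*k+8"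
    unfolding gpoly_even_step
    using Suc odd degree_mult_le[of "2 * mu_poly ^ 2" "gpoly (2*k+3)"] mu
      degree_mult_le[of "rho_poly ^ 2" "gpoly (2*k+2)"] rho
    by (intro degree_diff_le) auto
  ultimately show ?case by (simp add: eval_nat_numeral)
qed

lemma poly_gpoly_reciprocal:
  assumes "t \<noteq> 0"
  shows "t^(4*k) * poly (gpoly (2*k+1)) (1/t) = poly (gpoly (2*k+1)) t
   \<and> t^(4*k+4) * poly (gpoly (2*k+2)) (1/t) = poly (gpoly (2*k+2)) t"
proof -
  have rho: "t^2 * rho (1/t) = rho t" and mu: "t^2 * mu (1/t) = mu t"
    using assms by (simp_all add: rho_eq mu_eq field_simps power2_eq_square)
  show ?thesis
  proof (induction k)
    case 0
    show ?case using assms by (simp add: gpoly_2 field_simps power2_eq_square power4_eq_xxxx)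
  next
    case (Suc k)
    then have IH: "t^(4*k) * poly (gpoly (2*k+1)) (1/t) = poly (gpoly (2*k+1)) t"
      "t^(4*k+4) * poly (gpoly (2*k+2)) (1/t) = poly (gpoly (2*k+2)) t"
      by auto
    have odd: "t^(4*k+4) * poly (gpoly (2*k+3)) (1/t) = poly (gpoly (2*k+3)) t"
    proof -
      have "t^(4*k+4) * poly (gpoly (2*k+3)) (1/t)
          = 2 * (t^(4*k+4) * poly (gpoly (2*k+2)) (1/t))
            - (t^2 * rho (1/t))^2 * (t^(4*k) * poly (gpoly (2*k+1)) (1/t))"
        unfolding gpoly_odd_step by (simp add: power_add power_mult_distrib algebra_simps)
      also have "\<dots> = poly (gpoly (2*k+3)) t"
        unfolding IH rho gpoly_odd_step by simp
      finally show ?thesis .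
    qed
    have "t^(4*k+8) * poly (gpoly (2*k+4)) (1/t)
        = 2 * (t^2 * mu (1/t))^2 * (t^(4*k+4) * poly (gpoly (2*k+3)) (1/t))
          - (t^2 * rho (1/t))^2 * (t^(4*k+4) * poly (gpoly (2*k+2)) (1/t))"
      unfolding gpoly_even_step by (simp add: power_add power_mult_distrib algebra_simps)
    also have "\<dots> = poly (gpoly (2*k+4)) t"
      unfolding IH odd rho mu gpoly_even_step by simp
    finally have "t^(4*k+8) * poly (gpoly (2*k+4)) (1/t) = poly (gpoly (2*k+4)) t" .
    with odd show ?case by (simp add: eval_nat_numeral)
  qed
qed

lemma poly_gpoly_mu0:
  "poly (gpoly (2*k+1)) mu0 = real (2*k+1) * (- (rho mu0 ^ 2)) ^ k
   \<and> poly (gpoly (2*k+2)) mu0 = (- (rho mu0 ^ 2)) ^ (k+1)"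
proof (induction k)
  case 0
  have "mu mu0 = 0" using mu_eq_0_iff[of mu0] mu0_bounds by simp
  then have "poly (gpoly 2) mu0 = - (rho mu0 ^ 2)"
    by (simp add: poly_gpoly_2)
  moreover have "poly (gpoly 1) mu0 = 1" by (simp add: One_nat_def)
  ultimately show ?case by (simp only: mult_0_right add_0_left) simp
next
  case (Suc k)
  have odd: "poly (gpoly (2*k+3)) mu0 = real (2*k+3) * (- (rho mu0 ^ 2)) ^ (k+1)"
    unfolding gpoly_odd_step using Suc by (simp add: algebra_simps)
  moreover have "poly (gpoly (2*k+4)) mu0 = (- (rho mu0 ^ 2)) ^ (k+2)"
    unfolding gpoly_even_step using Suc mu_eq_0_iff[of mu0] mu0_bounds by simp
  ultimately show ?case by (simp add: eval_nat_numeral)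
qed

definition psi :: "real \<Rightarrow> real" where "psi t = arccos (mu t / rho t)"

lemma rho_cos_psi: "t \<ge> 0 \<Longrightarrow> rho t * cos (psi t) = mu t"
  using mu_div_rho_bounds[of t] rho_pos[of t] by (simp add: psi_def cos_arccos)

lemma cos_mult_add_2:
  "cos (real (n+2) * x) = 2 * cos x * cos (real (n+1) * x) - cos (real n * x)"
proof -
  have "cos ((real n + 1) * x + x) + cos ((real n + 1) * x - x) = 2 * cos x * cos ((real n + 1) * x)"
    by (simp add: cos_add cos_diff)
  thus ?thesis by (simp add: algebra_simps)
qed

text \<open>For \<open>t \<ge> 0\<close> this is \<open>\<rho>^n T_n (\<mu>/\<rho>)\<close> with T_n the Chebyshev polynomial of the first
  kind, since \<open>cos \<psi> = \<mu>/\<rho>\<close> and \<open>cos (n \<psi>) = T_n (cos \<psi>)\<close>.\<close>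

definition cheb_hom :: "nat \<Rightarrow> real \<Rightarrow> real" where
  "cheb_hom n t = rho t ^ n * cos (real n * psi t)"

lemma cheb_hom_add_2:
  assumes "t \<ge> 0"
  shows "cheb_hom (n+2) t = 2 * mu t * cheb_hom (n+1) t - rho t ^ 2 * cheb_hom n t"
proof -
  have "cheb_hom (n+2) t
      = rho t ^ n * rho t ^ 2 * (2 * cos (psi t) * cos (real (n+1) * psi t) - cos (real n * psi t))"
    unfolding cheb_hom_def cos_mult_add_2 by (simp add: power_add power2_eq_square)
  also have "\<dots> = 2 * (rho t * cos (psi t)) * cheb_hom (n+1) t - rho t ^ 2 * cheb_hom n t"
    by (simp add: cheb_hom_def algebra_simps power2_eq_square)
  finally show ?thesis by (simp add: rho_cos_psi[OF assms])
qed

lemma gpoly_cheb_hom: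
  assumes "t \<ge> 0"
  shows "poly (gpoly (2*k+1)) t * mu t = cheb_hom (2*k+1) t \<and> poly (gpoly (2*k+2)) t = cheb_hom (2*k+2) t"
proof (induction k)
  case 0
  have c1: "cheb_hom 1 t = mu t"
    using rho_cos_psi[OF assms] by (simp add: cheb_hom_def)
  have "cheb_hom 2 t = 2 * mu t * mu t - rho t ^ 2"
    using cheb_hom_add_2[OF assms, of 0] c1 by (simp add: cheb_hom_def power2_eq_square)
  then have "poly (gpoly 2) t = cheb_hom 2 t"
    by (simp add: poly_gpoly_2 power2_eq_square)
  moreover have "poly (gpoly 1) t * mu t = cheb_hom 1 t"
    using c1 by (simp add: One_nat_def)
  ultimately show ?case by (simp only: mult_0_right add_0)
next
  case (Suc k)
  have IH: "poly (gpoly (2*k+1)) t * mu t = cheb_hom (2*k+1) t"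
    "poly (gpoly (2*k+2)) t = cheb_hom (2*k+2) t"
    using Suc by auto
  have idx: "2*k+1+1 = 2*k+2" "2*k+1+2 = 2*k+3" "2*k+2+1 = 2*k+3" "2*k+2+2 = 2*k+4"
    by simp_all
  have odd: "poly (gpoly (2*k+3)) t * mu t = cheb_hom (2*k+3) t"
  proof -
    have "poly (gpoly (2*k+3)) t * mu t
        = 2 * mu t * poly (gpoly (2*k+2)) t - rho t ^ 2 * (poly (gpoly (2*k+1)) t * mu t)"
      unfolding gpoly_odd_step by (simp add: algebra_simps)
    also have "\<dots> = cheb_hom (2*k+3) t"
      using cheb_hom_add_2[OF assms, of "2*k+1"] by (simp only: IH idx)
    finally show ?thesis .
  qed
  moreover have "poly (gpoly (2*k+4)) t = cheb_hom (2*k+4) t"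
  proof -
    have "poly (gpoly (2*k+4)) t
        = 2 * mu t * (poly (gpoly (2*k+3)) t * mu t) - rho t ^ 2 * poly (gpoly (2*k+2)) t"
      unfolding gpoly_even_step by (simp add: algebra_simps power2_eq_square)
    also have "\<dots> = cheb_hom (2*k+4) t"
      using cheb_hom_add_2[OF assms, of "2*k+2"] by (simp only: odd IH idx)
    finally show ?thesis .
  qed
  ultimately show ?case by (simp add: eval_nat_numeral)
qed

lemma psi_strict_mono: "strict_mono_on {0..1} psi"
proof (rule strict_mono_onI)
  fix s t :: real assume "s \<in> {0..1}" "t \<in> {0..1}" "s < t"
  then have st: "0 \<le> s" "s < t" "t \<le> 1" by auto
  have "s * t \<le> s" using st by (simp add: mult_left_le)
  then have "0 < (t - s) * (1 - s * t)" using st by (intro mult_pos_pos) auto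
  moreover have "t * rho s - s * rho t = (t - s) * (1 - s * t)"
    by (simp add: rho_eq power2_eq_square algebra_simps)
  ultimately have "s * rho t < t * rho s" by linarith
  then have "s / rho s < t / rho t"
    using rho_pos[of s] rho_pos[of t] by (simp add: field_simps)
  moreover have "mu x / rho x = 1 - 2 * (x / rho x)" for x
    using rho_pos[of x] by (simp add: mu_eq rho_eq field_simps)
  ultimately have "mu t / rho t < mu s / rho s" by simp
  then show "psi s < psi t"
    unfolding psi_def using st mu_div_rho_bounds[of s] mu_div_rho_bounds[of t]
    by (intro arccos_less_arccos) auto
qed

lemma psi_0: "psi 0 = 0"
  by (simp add: psi_def mu_eq rho_eq)

lemma psi_1: "psi 1 = pi"
  by (simp add: psi_def mu_eq rho_eq)

lemma psi_mu0: "psi mu0 = pi/2"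
  using mu_eq_0_iff[of mu0] mu0_bounds by (simp add: psi_def)

lemma psi_image: "psi ` {0..1} = {0..pi}"
proof
  show "psi ` {0..1} \<subseteq> {0..pi}"
    unfolding psi_def using mu_div_rho_bounds arccos_lbound arccos_ubound by auto
  have "rho t \<noteq> 0" for t using rho_pos[of t] by simp
  then have "continuous_on {0..1} psi"
    unfolding psi_def using mu_div_rho_bounds
    by (intro continuous_on_arccos continuous_intros) auto
  then show "{0..pi} \<subseteq> psi ` {0..1}"
    using IVT'[of psi 0 _ 1] psi_0 psi_1 by force
qed

lemma strict_mono_on_the_inv_into:
  fixes f :: "'a::linorder \<Rightarrow> 'b::linorder"
  assumes "strict_mono_on A f"
  shows "strict_mono_on (f ` A) (the_inv_into A f)"
proof (rule strict_mono_onI)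
  fix y y' assume "y \<in> f ` A" "y' \<in> f ` A" "y < y'"
  then obtain x x' where "x \<in> A" "x' \<in> A" "y = f x" "y' = f x'" by blast
  moreover have "inj_on f A" using assms by (rule strict_mono_on_imp_inj_on)
  ultimately show "the_inv_into A f y < the_inv_into A f y'"
    using \<open>y < y'\<close> strict_mono_on_less[OF assms] by (simp add: the_inv_into_f_f)
qed

definition phi :: "real \<Rightarrow> real" where "phi = the_inv_into {0..1} psi"

lemma phi_strict_mono: "strict_mono_on {0..pi} phi"
  using strict_mono_on_the_inv_into[OF psi_strict_mono] by (simp add: phi_def psi_image)

lemma phi_psi: "t \<in> {0..1} \<Longrightarrow> phi (psi t) = t"
  unfolding phi_def using strict_mono_on_imp_inj_on[OF psi_strict_mono] by (rule the_inv_into_f_f)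

lemma Collect_psi_eq_phi_image:
  "{t. 0 \<le> t \<and> t \<le> 1 \<and> P (psi t)} = phi ` {th. 0 \<le> th \<and> th \<le> pi \<and> P th}"
proof -
  have "{t. 0 \<le> t \<and> t \<le> 1 \<and> P (psi t)} = phi ` psi ` {t \<in> {0..1}. P (psi t)}"
    using phi_psi by (force simp: image_image)
  also have "psi ` {t \<in> {0..1}. P (psi t)} = {th \<in> psi ` {0..1}. P th}"
    by blast
  also have "\<dots> = {th. 0 \<le> th \<and> th \<le> pi \<and> P th}"
    unfolding psi_image by auto
  finally show ?thesis .
qed

definition ang :: "nat \<Rightarrow> nat \<Rightarrow> real" where
  "ang n i = (2 * real i - 1) * pi / (2 * real n)"

lemma ang_bounds:
  assumes "1 \<le> i" "i \<le> n"
  shows "0 < ang n i" "ang n i < pi"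
proof -
  have "(2 * real i - 1) * pi < (2 * real n) * pi"
    using assms by (intro mult_strict_right_mono) auto
  then show "ang n i < pi" using assms by (simp add: ang_def divide_simps)
  show "0 < ang n i" using assms by (simp add: ang_def)
qed

lemma ang_inj: "1 \<le> n \<Longrightarrow> ang n i = ang n j \<Longrightarrow> i = j"
  by (simp add: ang_def field_simps)

lemma cos_mult_zeros:
  assumes "1 \<le> n"
  shows "{th. 0 \<le> th \<and> th \<le> pi \<and> cos (real n * th) = 0} = ang n ` {1..n}"
proof (intro set_eqI iffI)
  fix th assume "th \<in> {th. 0 \<le> th \<and> th \<le> pi \<and> cos (real n * th) = 0}"
  then have th: "0 \<le> th" "th \<le> pi" "cos (real n * th) = 0" by auto
  obtain j where j: "odd j" "real n * th = real j * (pi/2)"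
  proof -
    from th(3) consider j where "odd j" "real n * th = real j * (pi/2)"
      | j where "odd j" "real n * th = - (real j * (pi/2))"
      unfolding cos_zero_iff by blast
    then show ?thesis
    proof cases
      case (2 j)
      have "0 < real j * (pi/2)" using \<open>odd j\<close> by (cases j) auto
      moreover have "0 \<le> real n * th" using th(1) by simp
      ultimately show ?thesis using 2 by linarith
    qed (use that in blast)
  qed
  then obtain i where i: "j = 2*i + 1" by (blast elim: oddE)
  have "real j * (pi/2) \<le> real n * pi"
    using j(2) th(2) by (metis mult_left_mono of_nat_0_le_iff)
  then have "real j \<le> 2 * real n" by (simp add: field_simps)
  then have "i + 1 \<le> n" using i by simp
  moreover have "th = ang n (i+1)"
    using j(2) i assms by (simp add: ang_def field_simps)
  ultimately show "th \<in> ang n ` {1..n}" by force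
next
  fix th assume "th \<in> ang n ` {1..n}"
  then obtain i where i: "1 \<le> i" "i \<le> n" "th = ang n i" by auto
  have "real n * th = real (2*i - 1) * (pi/2)"
    using i assms by (simp add: ang_def field_simps of_nat_diff)
  moreover have "odd (2*i - 1)" using i by simp
  ultimately have "cos (real n * th) = 0" unfolding cos_zero_iff by blast
  then show "th \<in> {th. 0 \<le> th \<and> th \<le> pi \<and> cos (real n * th) = 0}"
    using ang_bounds[OF i(1,2)] i by auto
qed

lemma phi_ang_less:
  assumes "i \<in> {1..n}" "j \<in> {1..n'}" "(2 * real i - 1) * real n' < (2 * real j - 1) * real n"
  shows "phi (ang n i) < phi (ang n' j)"
proof -
  have "(2 * real i - 1) * real n' * pi < (2 * real j - 1) * real n * pi"
    using assms(3) by (intro mult_strict_right_mono) auto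
  then have "ang n i < ang n' j"
    using assms(1,2) by (simp add: ang_def field_simps)
  moreover have "ang n i \<in> {0..pi}" "ang n' j \<in> {0..pi}"
    using ang_bounds assms(1,2) by (auto intro: less_imp_le)
  ultimately show ?thesis
    using phi_strict_mono by (auto intro: strict_mono_onD)
qed

lemma phi_ang_bounds:
  assumes "i \<in> {1..n}"
  shows "0 < phi (ang n i)" "phi (ang n i) < 1"
proof -
  have "phi 0 = 0" "phi pi = 1" using phi_psi[of 0] phi_psi[of 1] psi_0 psi_1 by simp_all
  moreover have "0 < ang n i" "ang n i < pi" using ang_bounds assms by auto
  ultimately show "0 < phi (ang n i)" "phi (ang n i) < 1"
    using strict_mono_onD[OF phi_strict_mono, of 0 "ang n i"]
      strict_mono_onD[OF phi_strict_mono, of "ang n i" pi] by auto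
qed

lemma mu0_eq_phi_ang: "mu0 = phi (ang 1 1)"
  using phi_psi[of mu0] psi_mu0 mu0_bounds by (simp add: ang_def)

definition even_zero :: "nat \<Rightarrow> nat \<Rightarrow> real" where
  "even_zero k i = phi (ang (2*k+2) i)"

text \<open>The middle angle \<open>ang (2k+1) (k+1) = \<pi>/2\<close>, i.e.\ the zero \<open>mu0\<close> of \<open>\<mu>\<close>, is skipped:
  it belongs to the factor \<open>\<mu>\<close> of \<open>\<mu> g_(2k+1)\<close>.\<close>

definition odd_zero :: "nat \<Rightarrow> nat \<Rightarrow> real" where
  "odd_zero k i = phi (ang (2*k+1) (if i \<le> k then i else i+1))"

lemma gpoly_even_eq_0_iff:
  assumes "t \<ge> 0"
  shows "poly (gpoly (2*k+2)) t = 0 \<longleftrightarrow> cos (real (2*k+2) * psi t) = 0"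
  using gpoly_cheb_hom[OF assms, of k] rho_pos[of t] by (simp add: cheb_hom_def)

lemma gpoly_odd_eq_0_iff:
  assumes "0 \<le> t" "t \<le> 1"
  shows "poly (gpoly (2*k+1)) t = 0 \<longleftrightarrow> cos (real (2*k+1) * psi t) = 0 \<and> psi t \<noteq> pi/2"
proof -
  have "psi t = pi/2 \<longleftrightarrow> t = mu0"
    using inj_on_eq_iff[OF strict_mono_on_imp_inj_on[OF psi_strict_mono], of t mu0]
      psi_mu0 assms mu0_bounds by auto
  moreover have "poly (gpoly (2*k+1)) mu0 \<noteq> 0"
    using poly_gpoly_mu0[of k] rho_pos[of mu0] by simp
  ultimately show ?thesis
    using gpoly_cheb_hom[OF assms(1), of k] rho_pos[of t] mu_eq_0_iff[OF assms(2)]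
    by (auto simp: cheb_hom_def)
qed

lemma zeros01_gpoly_even: "zeros01 (gpoly (2*k+2)) = even_zero k ` {1..2*k+2}"
proof -
  have "zeros01 (gpoly (2*k+2)) = {t. 0 \<le> t \<and> t \<le> 1 \<and> cos (real (2*k+2) * psi t) = 0}"
    using gpoly_even_eq_0_iff by (auto simp: zeros01_def)
  also have "\<dots> = phi ` {th. 0 \<le> th \<and> th \<le> pi \<and> cos (real (2*k+2) * th) = 0}"
    by (rule Collect_psi_eq_phi_image[where P = "\<lambda>th. cos (real (2*k+2) * th) = 0"])
  also have "\<dots> = phi ` ang (2*k+2) ` {1..2*k+2}"
    using cos_mult_zeros[of "2*k+2"] by simp
  finally show ?thesis by (simp add: image_image even_zero_def)
qed

lemma zeros01_gpoly_odd: "zeros01 (gpoly (2*k+1)) = odd_zero k ` {1..2*k}"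
proof -
  define skip :: "nat \<Rightarrow> nat" where "skip i = (if i \<le> k then i else i+1)" for i
  have skip: "{1..2*k+1} - {k+1} = skip ` {1..2*k}"
  proof (intro set_eqI iffI)
    fix j assume "j \<in> {1..2*k+1} - {k+1}"
    then have "j = skip (if j \<le> k then j else j - 1)" "(if j \<le> k then j else j - 1) \<in> {1..2*k}"
      by (auto simp: skip_def)
    then show "j \<in> skip ` {1..2*k}" by blast
  qed (auto simp: skip_def)
  have inj: "inj_on (ang (2*k+1)) {1..2*k+1}"
    by (intro inj_onI) (rule ang_inj; simp)
  have mid: "pi/2 = ang (2*k+1) (k+1)"
    by (simp add: ang_def field_simps)
  have "zeros01 (gpoly (2*k+1))
      = {t. 0 \<le> t \<and> t \<le> 1 \<and> cos (real (2*k+1) * psi t) = 0 \<and> psi t \<noteq> pi/2}"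
    using gpoly_odd_eq_0_iff by (auto simp: zeros01_def)
  also have "\<dots> = phi ` {th. 0 \<le> th \<and> th \<le> pi \<and> cos (real (2*k+1) * th) = 0 \<and> th \<noteq> pi/2}"
    by (rule Collect_psi_eq_phi_image[where P = "\<lambda>th. cos (real (2*k+1) * th) = 0 \<and> th \<noteq> pi/2"])
  also have "{th. 0 \<le> th \<and> th \<le> pi \<and> cos (real (2*k+1) * th) = 0 \<and> th \<noteq> pi/2}
      = {th. 0 \<le> th \<and> th \<le> pi \<and> cos (real (2*k+1) * th) = 0} - {ang (2*k+1) (k+1)}"
    unfolding mid by blast
  also have "\<dots> = ang (2*k+1) ` {1..2*k+1} - {ang (2*k+1) (k+1)}"
    by (subst cos_mult_zeros) simp_all
  also have "\<dots> = ang (2*k+1) ` ({1..2*k+1} - {k+1})"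
    using inj_on_image_set_diff[OF inj, of "{1..2*k+1}" "{k+1}"] by simp
  also have "phi ` \<dots> = odd_zero k ` {1..2*k}"
    unfolding skip image_image skip_def odd_zero_def[abs_def] ..
  finally show ?thesis .
qed

lemma strict_mono_even_zero: "strict_mono_on {1..2*k+2} (even_zero k)"
  by (rule strict_mono_onI) (auto simp: even_zero_def intro!: phi_ang_less)

lemma strict_mono_odd_zero: "strict_mono_on {1..2*k} (odd_zero k)"
  by (rule strict_mono_onI) (auto simp: odd_zero_def intro!: phi_ang_less)

lemma sorted_list_of_set_image_strict_mono:
  fixes f :: "nat \<Rightarrow> 'a::linorder"
  assumes "strict_mono_on {1..n} f"
  shows "sorted_list_of_set (f ` {1..n}) = map f [1..<n+1]"
proof -
  have "sorted_wrt (<) (map f [1..<n+1])"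
    unfolding sorted_wrt_map
    by (rule sorted_wrt_mono_rel[OF _ sorted_wrt_upt]) (auto intro: strict_mono_onD[OF assms])
  moreover have "card (f ` {1..n}) = n"
    using card_image[OF strict_mono_on_imp_inj_on[OF assms]] by simp
  ultimately show ?thesis
    by (subst sorted_list_of_set_unique[symmetric]) auto
qed

lemma nth_sorted_list_of_set_image_strict_mono:
  fixes f :: "nat \<Rightarrow> 'a::linorder"
  assumes "strict_mono_on {1..n} f" "i \<in> {1..n}"
  shows "sorted_list_of_set (f ` {1..n}) ! (i - 1) = f i"
  unfolding sorted_list_of_set_image_strict_mono[OF assms(1)]
  using assms(2) by (auto simp del: upt_Suc)

lemma card_zeros01_gpoly:
  "card (zeros01 (gpoly (2*k+1))) = 2*k" "card (zeros01 (gpoly (2*k+2))) = 2*k+2"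
  unfolding zeros01_gpoly_odd zeros01_gpoly_even
  using card_image[OF strict_mono_on_imp_inj_on[OF strict_mono_odd_zero]]
    card_image[OF strict_mono_on_imp_inj_on[OF strict_mono_even_zero]] by simp_all

lemma positive_nat_parity_cases:
  fixes n :: nat
  assumes "1 \<le> n"
  obtains k where "n = 2*k+1" | k where "n = 2*k+2"
proof (cases "even n")
  case True
  then obtain m where "n = 2*m" by (elim evenE)
  with assms have "n = 2*(m-1)+2" by (cases m) auto
  then show ?thesis using that by blast
next
  case False
  then show ?thesis using that by (blast elim: oddE)
qed

lemma zeros01_gpoly_subset:
  assumes "1 \<le> n"
  shows "zeros01 (gpoly n) \<subseteq> {0<..<1}"
  using assms
proof (cases rule: positive_nat_parity_cases)
  case (1 k)
  show ?thesis unfolding 1 zeros01_gpoly_odd odd_zero_def by (auto intro!: phi_ang_bounds)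
next
  case (2 k)
  show ?thesis unfolding 2 zeros01_gpoly_even even_zero_def by (auto intro!: phi_ang_bounds)
qed

lemma degree_gpoly_le_card_zeros01:
  assumes "1 \<le> n"
  shows "degree (gpoly n) \<le> 2 * card (zeros01 (gpoly n))"
  using assms
proof (cases rule: positive_nat_parity_cases)
  case (1 k)
  show ?thesis unfolding 1 card_zeros01_gpoly using degree_gpoly[of k] by simp
next
  case (2 k)
  show ?thesis unfolding 2 card_zeros01_gpoly using degree_gpoly[of k] by simp
qed

lemma cos_psi_zeros01_gpoly:
  assumes "1 \<le> n" "t \<in> zeros01 (gpoly n)"
  shows "cos (real n * psi t) = 0"
  using assms(1)
proof (cases rule: positive_nat_parity_cases)
  case (1 k)
  show ?thesis using assms(2) gpoly_odd_eq_0_iff[of t k] unfolding 1 by (simp add: zeros01_def)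
next
  case (2 k)
  show ?thesis using assms(2) gpoly_even_eq_0_iff[of t k] unfolding 2 by (simp add: zeros01_def)
qed

lemma reciprocal_zeros01_gpoly:
  assumes "1 \<le> n" "t \<in> zeros01 (gpoly n)"
  shows "poly (gpoly n) (1/t) = 0"
proof -
  have t: "t \<noteq> 0" "poly (gpoly n) t = 0"
    using zeros01_gpoly_subset assms by (fastforce simp: zeros01_def)+
  from assms(1) show ?thesis
  proof (cases rule: positive_nat_parity_cases)
    case (1 k)
    show ?thesis using t poly_gpoly_reciprocal[OF t(1), of k] unfolding 1 by simp
  next
    case (2 k)
    show ?thesis using t poly_gpoly_reciprocal[OF t(1), of k] unfolding 2 by simp
  qed
qed

lemma cos_mult_consecutive_zero:
  assumes "cos (real n * x) = 0" "cos (real (Suc n) * x) = 0"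
  shows "sin x = 0"
proof -
  have "cos (real n * x + x) = 0" using assms(2) by (simp add: algebra_simps)
  hence "sin (real n * x) * sin x = 0" using assms(1) by (simp add: cos_add)
  moreover have "sin (real n * x) \<noteq> 0"
    using sin_cos_squared_add[of "real n * x"] assms(1) by auto
  ultimately show ?thesis by simp
qed

lemma rsquarefree_if_degree_le_card_roots:
  fixes p :: "'a::idom poly"
  assumes "p \<noteq> 0" "\<forall>x\<in>S. poly p x = 0" "degree p \<le> card S"
  shows "rsquarefree p"
  unfolding rsquarefree_def
proof (intro conjI allI assms(1))
  fix a
  show "order a p = 0 \<or> order a p = 1"
  proof (rule ccontr)
    assume "\<not> (order a p = 0 \<or> order a p = 1)"
    then have "[:-a, 1:] ^ 2 dvd p" using order_divides by fastforce
    then obtain q where "p = [:-a, 1:] ^ 2 * q" by (elim dvdE)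
    moreover define r where "r = [:-a, 1:] * q"
    ultimately have p: "p = [:-a, 1:] * r" by (simp only: power2_eq_square mult.assoc)
    have "r \<noteq> 0" using assms(1) p by auto
    have "S \<subseteq> {x. poly r x = 0}"
      using assms(2) by (auto simp: p r_def)
    then have "card S \<le> card {x. poly r x = 0}"
      using poly_roots_finite[OF \<open>r \<noteq> 0\<close>] by (rule card_mono[rotated])
    also have "\<dots> \<le> degree r" by (rule card_poly_roots_bound[OF \<open>r \<noteq> 0\<close>])
    also have "\<dots> < degree p"
      unfolding p using \<open>r \<noteq> 0\<close> by (subst degree_mult_eq) auto
    finally show False using assms(3) by simp
  qed
qed

lemma rsquarefree_if_reciprocal_roots:
  fixes p :: "real poly"
  assumes "p \<noteq> 0" "finite Z" "Z \<subseteq> {0<..<1}"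
    and "\<forall>t\<in>Z. poly p t = 0 \<and> poly p (1/t) = 0" "degree p \<le> 2 * card Z"
  shows "rsquarefree p"
proof (rule rsquarefree_if_degree_le_card_roots)
  show "p \<noteq> 0" by (fact assms(1))
  show "\<forall>x\<in>Z \<union> (\<lambda>t. 1/t) ` Z. poly p x = 0" using assms(4) by auto
  have "Z \<inter> (\<lambda>t. 1/t) ` Z = {}"
  proof (intro equals0I)
    fix x assume "x \<in> Z \<inter> (\<lambda>t. 1/t) ` Z"
    then obtain s where "x \<in> Z" "s \<in> Z" "x = 1/s" by blast
    then have "x < 1" "0 < s" "s < 1" using assms(3) by auto
    then have "1 < 1/s" by (simp add: field_simps)
    with \<open>x = 1/s\<close> \<open>x < 1\<close> show False by simp
  qed
  moreover have "inj_on (\<lambda>t. 1/t) Z" by (auto intro: inj_onI)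
  ultimately have "card (Z \<union> (\<lambda>t. 1/t) ` Z) = 2 * card Z"
    using assms(2) by (simp add: card_Un_disjoint card_image)
  then show "degree p \<le> card (Z \<union> (\<lambda>t. 1/t) ` Z)" using assms(5) by simp
qed

lemma rsquarefree_gpoly_consecutive:
  assumes "1 \<le> n"
  shows "rsquarefree (gpoly n * gpoly (Suc n))"
proof (rule rsquarefree_if_reciprocal_roots)
  let ?Z = "\<lambda>n. zeros01 (gpoly n)"
  have nz: "gpoly j \<noteq> 0" if "1 \<le> j" for j
    using zeros01_gpoly_subset[OF that] by (auto simp: zeros01_def)
  have fin: "finite (?Z j)" if "1 \<le> j" for j
    using poly_roots_finite[OF nz[OF that]] by (rule rev_finite_subset) (auto simp: zeros01_def)
  show "gpoly n * gpoly (Suc n) \<noteq> 0" using nz assms by simp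
  show "finite (?Z n \<union> ?Z (Suc n))" using fin assms by simp
  show "?Z n \<union> ?Z (Suc n) \<subseteq> {0<..<1}"
    using zeros01_gpoly_subset assms by simp
  show "\<forall>t\<in>?Z n \<union> ?Z (Suc n). poly (gpoly n * gpoly (Suc n)) t = 0
      \<and> poly (gpoly n * gpoly (Suc n)) (1/t) = 0"
    using reciprocal_zeros01_gpoly assms by (auto simp: zeros01_def)
  have "?Z n \<inter> ?Z (Suc n) = {}"
  proof (intro equals0I)
    fix t assume t: "t \<in> ?Z n \<inter> ?Z (Suc n)"
    then have "sin (psi t) = 0"
      using cos_psi_zeros01_gpoly[of n t] cos_psi_zeros01_gpoly[of "Suc n" t] assms
      by (intro cos_mult_consecutive_zero[of n]) auto
    moreover have "0 < t" "t < 1" using t zeros01_gpoly_subset[OF assms] by auto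
    then have "0 < psi t" "psi t < pi"
      using strict_mono_onD[OF psi_strict_mono, of 0 t] strict_mono_onD[OF psi_strict_mono, of t 1]
        psi_0 psi_1 by auto
    ultimately show False using sin_gt_zero by fastforce
  qed
  then have "card (?Z n \<union> ?Z (Suc n)) = card (?Z n) + card (?Z (Suc n))"
    using fin assms by (simp add: card_Un_disjoint)
  then show "degree (gpoly n * gpoly (Suc n)) \<le> 2 * card (?Z n \<union> ?Z (Suc n))"
    using degree_gpoly_le_card_zeros01[of n] degree_gpoly_le_card_zeros01[of "Suc n"] assms
      degree_mult_le[of "gpoly n" "gpoly (Suc n)"] by simp
qed

lemma even_zero_odd_zero_interlacing:
  "(\<forall>i\<in>{1..k}. even_zero k i < odd_zero k i \<and> odd_zero k i < even_zero k (i+1))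
   \<and> even_zero k (k+1) < mu0 \<and> mu0 < even_zero k (k+2)
   \<and> (\<forall>i\<in>{k+1..2*k}. even_zero k (i+1) < odd_zero k i \<and> odd_zero k i < even_zero k (i+2))
   \<and> even_zero k (2*k+2) < 1"
  unfolding even_zero_def odd_zero_def mu0_eq_phi_ang
  by (auto intro!: phi_ang_less phi_ang_bounds simp: algebra_simps)

lemma odd_zero_even_zero_interlacing:
  "(\<forall>i\<in>{1..k+1}. odd_zero (k+1) i < even_zero k i)
   \<and> (\<forall>i\<in>{1..k}. even_zero k i < odd_zero (k+1) (i+1))
   \<and> (\<forall>i\<in>{k+2..2*k+2}. even_zero k i < odd_zero (k+1) i)
   \<and> (\<forall>i\<in>{k+2..2*k+1}. odd_zero (k+1) i < even_zero k (i+1))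
   \<and> odd_zero (k+1) (2*k+2) < 1"
  unfolding even_zero_def odd_zero_def
  by (auto intro!: phi_ang_less phi_ang_bounds simp: algebra_simps)

theorem theorem11p8:
  fixes m :: nat
  assumes "m \<ge> 1"
  defines "A \<equiv> zeros01 (gpoly (2*m - 1))"
      and "B \<equiv> zeros01 (gpoly (2*m))"
      and "C \<equiv> zeros01 (gpoly (2*m + 1))"
      and "\<alpha> \<equiv> (\<lambda>i. sorted_list_of_set (zeros01 (gpoly (2*m - 1))) ! (i - 1))"
      and "\<beta> \<equiv> (\<lambda>i. sorted_list_of_set (zeros01 (gpoly (2*m))) ! (i - 1))"
      and "\<gamma> \<equiv> (\<lambda>i. sorted_list_of_set (zeros01 (gpoly (2*m + 1))) ! (i - 1))"
  shows "finite A \<and> card A = 2*(m - 1)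
       \<and> finite B \<and> card B = 2*m
       \<and> finite C \<and> card C = 2*m
       \<and> rsquarefree (gpoly (2*m - 1) * gpoly (2*m))
       \<and> rsquarefree (gpoly (2*m) * gpoly (2*m + 1))
       \<and> (\<forall>i\<in>{1..m-1}. \<beta> i < \<alpha> i \<and> \<alpha> i < \<beta> (i+1))
       \<and> \<beta> m < mu0 \<and> mu0 < \<beta> (m+1)
       \<and> (\<forall>i\<in>{m..2*(m-1)}. \<beta> (i+1) < \<alpha> i \<and> \<alpha> i < \<beta> (i+2))
       \<and> \<beta> (2*m) < 1
       \<and> (\<forall>i\<in>{1..m}. \<gamma> i < \<beta> i)
       \<and> (\<forall>i\<in>{1..<m}. \<beta> i < \<gamma> (i+1))
       \<and> (\<forall>i\<in>{m+1..2*m}. \<beta> i < \<gamma> i)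
       \<and> (\<forall>i\<in>{m+1..<2*m}. \<gamma> i < \<beta> (i+1))
       \<and> \<gamma> (2*m) < 1"
proof -
  obtain k where m: "m = k+1" using assms(1) by (metis le_add_diff_inverse2)
  have odd_idx: "2*m - 1 = 2*k+1" "2*m + 1 = 2*(k+1)+1" and even_idx: "2*m = 2*k+2"
    using m by simp_all
  have \<alpha>: "\<alpha> i = odd_zero k i" if "i \<in> {1..2*k}" for i
    unfolding \<alpha>_def odd_idx zeros01_gpoly_odd
    using nth_sorted_list_of_set_image_strict_mono[OF strict_mono_odd_zero that] .
  have \<beta>: "\<beta> i = even_zero k i" if "i \<in> {1..2*k+2}" for i
    unfolding \<beta>_def even_idx zeros01_gpoly_even
    using nth_sorted_list_of_set_image_strict_mono[OF strict_mono_even_zero that] .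
  have \<gamma>: "\<gamma> i = odd_zero (k+1) i" if "i \<in> {1..2*k+2}" for i
    using that unfolding \<gamma>_def odd_idx zeros01_gpoly_odd
    using nth_sorted_list_of_set_image_strict_mono[OF strict_mono_odd_zero, of i "k+1"] by simp
  \<comment> \<open>\<open>odd_idx\<close> must be unfolded first: \<open>even_idx\<close> would rewrite inside \<open>2*m - 1\<close>.\<close>
  have "finite A" "finite B" "finite C"
    unfolding A_def B_def C_def odd_idx unfolding even_idx zeros01_gpoly_odd zeros01_gpoly_even by simp_all
  moreover have "card A = 2*(m - 1)" "card B = 2*m" "card C = 2*m"
    unfolding A_def B_def C_def odd_idx unfolding even_idx card_zeros01_gpoly using m by simp_all
  moreover have "rsquarefree (gpoly (2*m - 1) * gpoly (2*m))"
    "rsquarefree (gpoly (2*m) * gpoly (2*m + 1))"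
    using rsquarefree_gpoly_consecutive[of "2*k+1"] rsquarefree_gpoly_consecutive[of "2*k+2"]
    unfolding odd_idx unfolding even_idx by simp_all
  ultimately show ?thesis
    using even_zero_odd_zero_interlacing[of k] odd_zero_even_zero_interlacing[of k] \<alpha> \<beta> \<gamma> m
    by auto
qed

end
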